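(* Let $G$ be a finite group and $\chi\in\mathrm{Irr}(G)$. Then $\chi$ is linear (i.e. $\chi(1)=1$) if and only if $[Z(\chi),G]=G'$.
   Context: $\mathrm{Irr}(G)$ is the set of complex irreducible characters of $G$. For a character $\chi$, $Z(\chi)=\{g\in G: |\chi(g)|=\chi(1)\}$. *)

theory Defs
  imports "HOL-Algebra.Generated_Groups" "Jordan_Normal_Form.Matrix"
begin

definition is_rep :: "('a, 'b) monoid_scheme \<Rightarrow> nat \<Rightarrow> ('a \<Rightarrow> complex mat) \<Rightarrow> bool" where
  "is_rep G n \<rho> \<longleftrightarrow> n \<ge> 1 \<and>
     (\<forall>g \<in> carrier G. \<rho> g \<in> carrier_mat n n) \<and>
     \<rho> \<one>\<^bsub>G\<^esub> = 1\<^sub>m n \<and>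
     (\<forall>g \<in> carrier G. \<forall>h \<in> carrier G. \<rho> (g \<otimes>\<^bsub>G\<^esub> h) = \<rho> g * \<rho> h)"

definition invariant_subspace :: "('a, 'b) monoid_scheme \<Rightarrow> nat \<Rightarrow> ('a \<Rightarrow> complex mat) \<Rightarrow> complex vec set \<Rightarrow> bool" where
  "invariant_subspace G n \<rho> W \<longleftrightarrow> W \<subseteq> carrier_vec n \<and> 0\<^sub>v n \<in> W \<and>
     (\<forall>v \<in> W. \<forall>w \<in> W. v + w \<in> W) \<and>
     (\<forall>c. \<forall>v \<in> W. c \<cdot>\<^sub>v v \<in> W) \<and>
     (\<forall>g \<in> carrier G. \<forall>v \<in> W. \<rho> g *\<^sub>v v \<in> W)"

definition irreducible_rep :: "('a, 'b) monoid_scheme \<Rightarrow> nat \<Rightarrow> ('a \<Rightarrow> complex mat) \<Rightarrow> bool" where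
  "irreducible_rep G n \<rho> \<longleftrightarrow> is_rep G n \<rho> \<and>
     (\<forall>W. invariant_subspace G n \<rho> W \<longrightarrow> W = {0\<^sub>v n} \<or> W = carrier_vec n)"

definition mat_trace :: "complex mat \<Rightarrow> complex" where
  "mat_trace A = (\<Sum>i<dim_row A. A $$ (i, i))"

definition character_of :: "('a, 'b) monoid_scheme \<Rightarrow> ('a \<Rightarrow> complex mat) \<Rightarrow> 'a \<Rightarrow> complex" where
  "character_of G \<rho> = (\<lambda>g. if g \<in> carrier G then mat_trace (\<rho> g) else 0)"

definition Irr :: "('a, 'b) monoid_scheme \<Rightarrow> ('a \<Rightarrow> complex) set" where
  "Irr G = {\<chi>. \<exists>n \<rho>. irreducible_rep G n \<rho> \<and> \<chi> = character_of G \<rho>}"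

definition char_center :: "('a, 'b) monoid_scheme \<Rightarrow> ('a \<Rightarrow> complex) \<Rightarrow> 'a set" where
  "char_center G \<chi> = {g \<in> carrier G. complex_of_real (cmod (\<chi> g)) = \<chi> \<one>\<^bsub>G\<^esub>}"

definition commutator_subgroup :: "('a, 'b) monoid_scheme \<Rightarrow> 'a set \<Rightarrow> 'a set \<Rightarrow> 'a set" where
  "commutator_subgroup G A B = generate G
     {a \<otimes>\<^bsub>G\<^esub> b \<otimes>\<^bsub>G\<^esub> inv\<^bsub>G\<^esub> a \<otimes>\<^bsub>G\<^esub> inv\<^bsub>G\<^esub> b | a b. a \<in> A \<and> b \<in> B}"

end

(*
  Let \<chi> be afforded by an irreducible representation \<rho> of degree n.  If n = 1, every \<rho> g is a
  root of unity, so Z(\<chi>) = G and [Z(\<chi>), G] = G'.  Conversely, for z in Z(\<chi>) the matrix \<rho> z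
  has finite order, hence is diagonalisable with eigenvalues on the unit circle, and
  |tr \<rho> z| = n forces all of them to be equal: \<rho> z is scalar.  Therefore [Z(\<chi>), G] lies in
  the kernel of \<rho>; if it equals G', the image of \<rho> is commutative, and by Schur's lemma an
  irreducible representation with commutative image has degree 1.
*)

theory Submission
  imports Defs "HOL-Algebra.Multiplicative_Group" "Jordan_Normal_Form.Jordan_Normal_Form_Existence"
begin

lemma jordan_block_pow_eq_one:
  assumes "m > 0" and "jordan_block k (a :: complex) ^\<^sub>m m = 1\<^sub>m k"
  shows "k \<le> 1 \<and> a ^ m = 1 \<or> k = 0"
proof -
  have entry: "(if i \<le> j then of_nat (m choose (j - i)) * a ^ (m + i - j) else 0) = (if i = j then 1 else 0)"
    if "i < k" "j < k" for i j
    using arg_cong[OF assms(2), of "\<lambda>A. A $$ (i, j)"] that unfolding jordan_block_pow by simp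
  show ?thesis
  proof (cases "k = 0")
    case False
    have am: "a ^ m = 1" using entry[of 0 0] False by simp
    have "\<not> 1 < k"
    proof
      assume "1 < k"
      then have "of_nat m * a ^ (m - 1) = 0" using entry[of 0 1] by simp
      with am \<open>m > 0\<close> show False by (metis of_nat_eq_0_iff not_gr0 power_0_left power_eq_0_iff zero_neq_one mult_eq_0_iff)
    qed
    with am show ?thesis by simp
  qed simp
qed

lemma four_block_mat_eq_diag_blocks:
  assumes "four_block_mat A B C D = four_block_mat A' B' C' D'"
    and "A \<in> carrier_mat k k" "A' \<in> carrier_mat k k" "D \<in> carrier_mat l l" "D' \<in> carrier_mat l l"
    and "B \<in> carrier_mat k l" "B' \<in> carrier_mat k l" "C \<in> carrier_mat l k" "C' \<in> carrier_mat l k"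
  shows "A = A'" and "D = D'"
proof -
  have entry: "four_block_mat A B C D $$ (i, j) = four_block_mat A' B' C' D' $$ (i, j)" for i j
    using assms(1) by simp
  show "A = A'"
  proof (rule eq_matI)
    fix i j assume "i < dim_row A'" "j < dim_col A'"
    then show "A $$ (i, j) = A' $$ (i, j)" using entry[of i j] assms(2-9) by simp
  qed (use assms in auto)
  show "D = D'"
  proof (rule eq_matI)
    fix i j assume "i < dim_row D'" "j < dim_col D'"
    then show "D $$ (i, j) = D' $$ (i, j)" using entry[of "i + k" "j + k"] assms(2-9) by simp
  qed (use assms in auto)
qed

lemma jordan_matrix_pow_eq_one_imp_diagonal:
  fixes n_as :: "(nat \<times> complex) list"
  assumes "m > 0" and "jordan_matrix n_as ^\<^sub>m m = 1\<^sub>m (sum_list (map fst n_as))"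
  shows "diagonal_mat (jordan_matrix n_as) \<and>
    (\<forall>i < sum_list (map fst n_as). jordan_matrix n_as $$ (i, i) ^ m = 1)"
  using assms(2)
proof (induction n_as)
  case Nil
  show ?case by (simp add: diagonal_mat_def)
next
  case (Cons ka rest)
  obtain k a where ka: "ka = (k, a)" by force
  let ?l = "sum_list (map fst rest)"
  have J: "jordan_matrix rest \<in> carrier_mat ?l ?l" and B: "jordan_block k a \<in> carrier_mat k k" by auto
  have "four_block_mat (jordan_block k a ^\<^sub>m m) (0\<^sub>m k ?l) (0\<^sub>m ?l k) (jordan_matrix rest ^\<^sub>m m)
     = four_block_mat (1\<^sub>m k) (0\<^sub>m k ?l) (0\<^sub>m ?l k) (1\<^sub>m ?l)"
    using Cons.prems unfolding ka jordan_matrix_Cons pow_four_block_mat[OF B J] by simp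
  from four_block_mat_eq_diag_blocks[OF this, of k ?l]
  have "jordan_block k a ^\<^sub>m m = 1\<^sub>m k" and "jordan_matrix rest ^\<^sub>m m = 1\<^sub>m ?l" by auto
  with jordan_block_pow_eq_one[OF \<open>m > 0\<close>] Cons.IH
  have "k \<le> 1" "k = 1 \<Longrightarrow> a ^ m = 1" and "diagonal_mat (jordan_matrix rest)"
    and "\<forall>i < ?l. jordan_matrix rest $$ (i, i) ^ m = 1" by auto
  then show ?case using J
    unfolding ka jordan_matrix_Cons diagonal_mat_def by (auto simp: jordan_block_def)
qed

lemma unit_sum_norm_eq_card_imp_const:
  fixes z :: "nat \<Rightarrow> complex"
  assumes unit: "\<And>i. i < n \<Longrightarrow> cmod (z i) = 1" and sum: "cmod (\<Sum>i<n. z i) = real n"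
  shows "\<exists>c. \<forall>i<n. z i = c"
proof -
  define S where "S = (\<Sum>i<n. z i)"
  have norm_S: "cmod S = real n" using sum unfolding S_def .
  have norm_Sz: "cmod (cnj S * z i) = real n" if "i < n" for i
    using unit[OF that] norm_S by (simp add: norm_mult)
  have Re_le: "Re (cnj S * z i) \<le> real n" if "i < n" for i
    using complex_Re_le_cmod norm_Sz[OF that] by metis
  have "(\<Sum>i<n. Re (cnj S * z i)) = Re (cnj S * S)"
    by (simp add: S_def Re_sum sum_distrib_left)
  also have "cnj S * S = of_real (cmod S ^ 2)" using complex_norm_square[of S] by (simp add: mult.commute)
  also have "Re \<dots> = (\<Sum>i<n. real n)" using norm_S by (simp add: power2_eq_square)
  finally have Re_sum_eq: "(\<Sum>i<n. Re (cnj S * z i)) = (\<Sum>i<n. real n)" .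
  have Re_eq: "Re (cnj S * z i) = real n" if i: "i < n" for i
  proof (rule ccontr)
    assume "Re (cnj S * z i) \<noteq> real n"
    with Re_le[OF i] have "Re (cnj S * z i) < real n" by simp
    then have "(\<Sum>j<n. Re (cnj S * z j)) < (\<Sum>j<n. real n)"
      using sum_strict_mono_ex1[of "{..<n}" "\<lambda>j. Re (cnj S * z j)" "\<lambda>_. real n"] Re_le i
      by blast
    with Re_sum_eq show False by simp
  qed
  \<comment> \<open>equality in the triangle inequality: every cnj S * z i is the positive real n\<close>
  have "cnj S * z i = of_nat n" if i: "i < n" for i
    using Re_eq[OF i] norm_Sz[OF i] cmod_power2[of "cnj S * z i"]
    by (simp add: complex_eq_iff)
  moreover have "cnj S \<noteq> 0" if "i < n" for i
    using norm_S that by auto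
  ultimately have "\<forall>i<n. z i = of_nat n / cnj S"
    by (simp add: field_simps)
  then show ?thesis by blast
qed

lemma mat_trace_mult_comm:
  assumes "A \<in> carrier_mat n k" and "B \<in> carrier_mat k n"
  shows "mat_trace (A * B) = mat_trace (B * A)"
proof -
  have "mat_trace (A * B) = (\<Sum>i<n. \<Sum>j<k. A $$ (i, j) * B $$ (j, i))"
    unfolding mat_trace_def using assms by (auto simp: scalar_prod_def atLeast0LessThan intro!: sum.cong)
  also have "\<dots> = (\<Sum>j<k. \<Sum>i<n. B $$ (j, i) * A $$ (i, j))"
    by (subst sum.swap) (simp add: mult.commute)
  also have "\<dots> = mat_trace (B * A)"
    unfolding mat_trace_def using assms by (auto simp: scalar_prod_def atLeast0LessThan intro!: sum.cong)
  finally show ?thesis .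
qed

lemma mat_trace_similar_mat_wit:
  assumes "A \<in> carrier_mat n n" and "similar_mat_wit A B P Q"
  shows "mat_trace A = mat_trace B"
proof -
  note w = similar_mat_witD2[OF assms]
  have "mat_trace A = mat_trace (P * (B * Q))" using w by (simp add: assoc_mult_mat[of P n n B n Q n])
  also have "\<dots> = mat_trace (B * Q * P)" using w by (intro mat_trace_mult_comm[of _ n n]) auto
  also have "\<dots> = mat_trace B" using w by (simp add: assoc_mult_mat[of B n n Q n P n])
  finally show ?thesis .
qed

lemma scalar_if_finite_order_and_trace_norm_eq_dim:
  fixes A :: "complex mat"
  assumes A: "A \<in> carrier_mat n n" and m: "m > 0" and Am: "A ^\<^sub>m m = 1\<^sub>m n"
    and trace: "cmod (mat_trace A) = real n"
  shows "\<exists>c. A = c \<cdot>\<^sub>m 1\<^sub>m n"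
proof -
  obtain n_as where "jordan_nf A n_as"
    using jordan_nf_exists[OF A] char_poly_factorized[OF A] by blast
  then obtain P Q where wit: "similar_mat_wit A (jordan_matrix n_as) P Q"
    unfolding jordan_nf_def similar_mat_def by blast
  let ?J = "jordan_matrix n_as"
  note w = similar_mat_witD2[OF A wit]
  have dim: "sum_list (map fst n_as) = n" using w(5) by (metis carrier_matD(1) jordan_matrix_dim(1))
  have "?J ^\<^sub>m m = Q * A ^\<^sub>m m * P" by (rule similar_mat_wit_pow_id[OF similar_mat_wit_sym[OF wit]])
  also have "\<dots> = 1\<^sub>m n" using w Am by simp
  finally have "diagonal_mat ?J" and roots: "\<forall>i<n. ?J $$ (i, i) ^ m = 1"
    using jordan_matrix_pow_eq_one_imp_diagonal[OF m] dim by auto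
  have "mat_trace ?J = (\<Sum>i<n. ?J $$ (i, i))" unfolding mat_trace_def using w dim by simp
  then have "cmod (\<Sum>i<n. ?J $$ (i, i)) = real n"
    using trace mat_trace_similar_mat_wit[OF A wit] by simp
  moreover have "cmod (?J $$ (i, i)) = 1" if "i < n" for i
    using roots that m power_eq_1_iff by blast
  ultimately obtain c where "\<forall>i<n. ?J $$ (i, i) = c"
    using unit_sum_norm_eq_card_imp_const[of n "\<lambda>i. ?J $$ (i, i)"] by blast
  with \<open>diagonal_mat ?J\<close> w(5) have J: "?J = c \<cdot>\<^sub>m 1\<^sub>m n"
    by (intro eq_matI) (auto simp: diagonal_mat_def)
  have "A = P * (c \<cdot>\<^sub>m 1\<^sub>m n) * Q" using w(3) unfolding J .
  also have "\<dots> = c \<cdot>\<^sub>m (P * Q)"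
    using mult_smult_distrib[OF w(6) one_carrier_mat] mult_smult_assoc_mat[OF _ w(7)] w(6) by simp
  also have "\<dots> = c \<cdot>\<^sub>m 1\<^sub>m n" using w(1) by simp
  finally show ?thesis by blast
qed

definition rep_kernel :: "('a, 'b) monoid_scheme \<Rightarrow> nat \<Rightarrow> ('a \<Rightarrow> complex mat) \<Rightarrow> 'a set" where
  "rep_kernel G n \<rho> = {g \<in> carrier G. \<rho> g = 1\<^sub>m n}"

lemma is_repD:
  assumes "is_rep G n \<rho>"
  shows "n \<ge> 1" and "g \<in> carrier G \<Longrightarrow> \<rho> g \<in> carrier_mat n n" and "\<rho> \<one>\<^bsub>G\<^esub> = 1\<^sub>m n"
    and "g \<in> carrier G \<Longrightarrow> h \<in> carrier G \<Longrightarrow> \<rho> (g \<otimes>\<^bsub>G\<^esub> h) = \<rho> g * \<rho> h"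
  using assms unfolding is_rep_def by auto

lemma (in monoid) rep_pow:
  assumes "is_rep G n \<rho>" and "g \<in> carrier G"
  shows "\<rho> (g [^] (k :: nat)) = \<rho> g ^\<^sub>m k"
  by (induction k) (simp_all add: is_repD[OF assms(1)] assms(2) carrier_matD[OF is_repD(2)[OF assms]])

lemma (in group) rep_finite_order:
  assumes "finite (carrier G)" and "is_rep G n \<rho>" and "g \<in> carrier G"
  shows "\<exists>m>0. \<rho> g ^\<^sub>m m = 1\<^sub>m n"
proof -
  have "\<rho> g ^\<^sub>m Coset.order G = 1\<^sub>m n"
    using rep_pow[OF assms(2,3), symmetric] pow_order_eq_1[OF assms(3)] is_repD(3)[OF assms(2)] by simp
  moreover have "Coset.order G > 0" using assms(1) order_gt_0_iff_finite by blast
  ultimately show ?thesis by blast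
qed

lemma (in group) rep_kernel_subgroup:
  assumes rep: "is_rep G n \<rho>"
  shows "subgroup (rep_kernel G n \<rho>) G"
proof (rule subgroupI)
  note \<rho> = is_repD[OF rep]
  show "rep_kernel G n \<rho> \<subseteq> carrier G" and "rep_kernel G n \<rho> \<noteq> {}"
    using \<rho>(3) by (auto simp: rep_kernel_def)
  fix g h assume "g \<in> rep_kernel G n \<rho>" and "h \<in> rep_kernel G n \<rho>"
  then show "g \<otimes> h \<in> rep_kernel G n \<rho>" using \<rho> by (auto simp: rep_kernel_def)
  from \<open>g \<in> rep_kernel G n \<rho>\<close> have g: "g \<in> carrier G" and \<rho>g: "\<rho> g = 1\<^sub>m n"
    by (auto simp: rep_kernel_def)
  have "\<rho> (inv g) = \<rho> (inv g) * \<rho> g" using g \<rho>g \<rho>(2)[of "inv g"] by simp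
  also have "\<dots> = \<rho> (inv g \<otimes> g)" by (rule \<rho>(4)[OF inv_closed[OF g] g, symmetric])
  also have "\<dots> = 1\<^sub>m n" using g \<rho>(3) by simp
  finally show "inv g \<in> rep_kernel G n \<rho>" using g by (simp add: rep_kernel_def)
qed

lemma (in group) rep_eq_iff_in_kernel:
  assumes rep: "is_rep G n \<rho>" and x: "x \<in> carrier G" and y: "y \<in> carrier G"
  shows "\<rho> x = \<rho> y \<longleftrightarrow> x \<otimes> inv y \<in> rep_kernel G n \<rho>"
proof -
  note \<rho> = is_repD[OF rep]
  have "\<rho> (x \<otimes> inv y) = \<rho> x * \<rho> (inv y)" and "\<rho> y * \<rho> (inv y) = 1\<^sub>m n"
    using x y \<rho> by (simp_all flip: \<rho>(4))
  moreover have "\<rho> x = \<rho> (x \<otimes> inv y) * \<rho> y"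
    using x y by (simp flip: \<rho>(4) add: m_assoc)
  ultimately show ?thesis using x y \<rho>(2)[OF y] by (auto simp: rep_kernel_def)
qed

lemma (in group) rep_commutator_in_kernel_iff:
  assumes rep: "is_rep G n \<rho>" and g: "g \<in> carrier G" and h: "h \<in> carrier G"
  shows "g \<otimes> h \<otimes> inv g \<otimes> inv h \<in> rep_kernel G n \<rho> \<longleftrightarrow> \<rho> g * \<rho> h = \<rho> h * \<rho> g"
proof -
  have "g \<otimes> h \<otimes> inv g \<otimes> inv h = (g \<otimes> h) \<otimes> inv (h \<otimes> g)"
    using g h by (simp add: inv_mult_group m_assoc)
  then show ?thesis
    using rep_eq_iff_in_kernel[OF rep, of "g \<otimes> h" "h \<otimes> g"] g h is_repD(4)[OF rep] by simp
qed

lemma (in group) rep_commute_if_derived_subset_kernel: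
  assumes rep: "is_rep G n \<rho>" and derived: "derived G (carrier G) \<subseteq> rep_kernel G n \<rho>"
    and g: "g \<in> carrier G" and h: "h \<in> carrier G"
  shows "\<rho> g * \<rho> h = \<rho> h * \<rho> g"
proof -
  have "g \<otimes> h \<otimes> inv g \<otimes> inv h \<in> derived G (carrier G)"
    unfolding derived_def using g h by (intro generate.incl) blast
  then show ?thesis using derived rep_commutator_in_kernel_iff[OF rep g h] by blast
qed

lemma invariant_subspace_eigenspace:
  assumes rep: "is_rep G n \<rho>" and A: "A \<in> carrier_mat n n"
    and comm: "\<And>g. g \<in> carrier G \<Longrightarrow> \<rho> g * A = A * \<rho> g"
  shows "invariant_subspace G n \<rho> {v \<in> carrier_vec n. A *\<^sub>v v = l \<cdot>\<^sub>v v}"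
    (is "invariant_subspace G n \<rho> ?E")
  unfolding invariant_subspace_def
proof (intro conjI ballI allI)
  show "?E \<subseteq> carrier_vec n" by auto
  show "0\<^sub>v n \<in> ?E" using A by (auto intro!: eq_vecI)
  fix v w assume "v \<in> ?E" "w \<in> ?E"
  then show "v + w \<in> ?E"
    by (auto simp: mult_add_distrib_mat_vec[OF A] smult_add_distrib_vec[of _ n])
next
  fix c v assume "v \<in> ?E"
  then show "c \<cdot>\<^sub>v v \<in> ?E"
    by (auto simp: mult_mat_vec[OF A] smult_smult_assoc mult.commute)
next
  fix g v assume g: "g \<in> carrier G" and "v \<in> ?E"
  then have v: "v \<in> carrier_vec n" and Av: "A *\<^sub>v v = l \<cdot>\<^sub>v v" by auto
  have \<rho>g: "\<rho> g \<in> carrier_mat n n" using is_repD(2)[OF rep g] .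
  have "A *\<^sub>v (\<rho> g *\<^sub>v v) = (\<rho> g * A) *\<^sub>v v" using \<rho>g A v comm[OF g] by simp
  also have "\<dots> = l \<cdot>\<^sub>v (\<rho> g *\<^sub>v v)" using \<rho>g A v Av by (simp add: mult_mat_vec)
  finally show "\<rho> g *\<^sub>v v \<in> ?E" using \<rho>g v by auto
qed

lemma irreducible_rep_commuting_mat_scalar:
  assumes irr: "irreducible_rep G n \<rho>" and A: "A \<in> carrier_mat n n"
    and comm: "\<And>g. g \<in> carrier G \<Longrightarrow> \<rho> g * A = A * \<rho> g"
  shows "\<exists>l. \<forall>v \<in> carrier_vec n. A *\<^sub>v v = l \<cdot>\<^sub>v v"
proof -
  have rep: "is_rep G n \<rho>" using irr unfolding irreducible_rep_def by simp
  have "degree (char_poly A) \<noteq> 0" using degree_monic_char_poly[OF A] is_repD(1)[OF rep] by simp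
  then obtain l where "poly (char_poly A) l = 0"
    using fundamental_theorem_of_algebra constant_degree by metis
  then obtain v where v: "v \<in> carrier_vec n" "v \<noteq> 0\<^sub>v n" "A *\<^sub>v v = l \<cdot>\<^sub>v v"
    using eigenvalue_root_char_poly[OF A] A unfolding eigenvalue_def eigenvector_def by auto
  have "{v \<in> carrier_vec n. A *\<^sub>v v = l \<cdot>\<^sub>v v} = carrier_vec n"
    using irr invariant_subspace_eigenspace[OF rep A comm] v unfolding irreducible_rep_def by blast
  then show ?thesis by blast
qed

lemma irreducible_rep_commutative_dim_one:
  assumes irr: "irreducible_rep G n \<rho>"
    and comm: "\<And>g h. g \<in> carrier G \<Longrightarrow> h \<in> carrier G \<Longrightarrow> \<rho> g * \<rho> h = \<rho> h * \<rho> g"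
  shows "n = 1"
proof (rule ccontr)
  assume "n \<noteq> 1"
  have rep: "is_rep G n \<rho>" using irr unfolding irreducible_rep_def by simp
  with \<open>n \<noteq> 1\<close> have n: "1 < n" using is_repD(1)[OF rep] by linarith
  \<comment> \<open>every \<rho> g is a scalar, so every subspace is invariant; take a coordinate hyperplane\<close>
  define W :: "complex vec set" where "W = {v \<in> carrier_vec n. v $ 0 = 0}"
  have "invariant_subspace G n \<rho> W"
    unfolding invariant_subspace_def
  proof (intro conjI ballI allI)
    fix g v assume g: "g \<in> carrier G" and v: "v \<in> W"
    obtain l where "\<forall>v \<in> carrier_vec n. \<rho> g *\<^sub>v v = l \<cdot>\<^sub>v v"
      using irreducible_rep_commuting_mat_scalar[OF irr is_repD(2)[OF rep g]] comm g by blast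
    moreover have "v \<in> carrier_vec n" and "v $ 0 = 0" using v by (simp_all add: W_def)
    ultimately show "\<rho> g *\<^sub>v v \<in> W" using n by (simp add: W_def carrier_vecD)
  qed (use n in \<open>auto simp: W_def\<close>)
  then have "W = {0\<^sub>v n} \<or> W = carrier_vec n" using irr unfolding irreducible_rep_def by blast
  moreover have "unit_vec n 1 \<in> W" and "unit_vec n 1 \<noteq> 0\<^sub>v n" and "unit_vec n 0 \<notin> W"
    using n by (auto simp: W_def)
  ultimately show False by auto
qed

lemma (in monoid) character_of_one:
  assumes "is_rep G n \<rho>"
  shows "character_of G \<rho> \<one> = of_nat n"
  using is_repD(3)[OF assms] by (simp add: character_of_def mat_trace_def)

lemma (in monoid) char_center_character_of:
  assumes "is_rep G n \<rho>"
  shows "char_center G (character_of G \<rho>) = {g \<in> carrier G. cmod (mat_trace (\<rho> g)) = real n}"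
proof -
  have "complex_of_real x = of_nat n \<longleftrightarrow> x = real n" for x
    by (metis of_real_eq_iff of_real_of_nat_eq)
  then show ?thesis
    unfolding char_center_def character_of_one[OF assms] by (auto simp: character_of_def)
qed

lemma pow_mat_1x1_entry:
  fixes A :: "'a :: comm_semiring_1 mat"
  assumes "A \<in> carrier_mat 1 1"
  shows "(A ^\<^sub>m k) $$ (0, 0) = A $$ (0, 0) ^ k"
proof (induction k)
  case (Suc k)
  then show ?case using assms by (simp add: scalar_prod_def mult.commute)
qed (use assms in simp)

lemma (in group) char_center_linear:
  assumes "finite (carrier G)" and "is_rep G 1 \<rho>"
  shows "char_center G (character_of G \<rho>) = carrier G"
proof -
  have "cmod (mat_trace (\<rho> g)) = 1" if g: "g \<in> carrier G" for g
  proof -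
    obtain m where "m > 0" and "\<rho> g ^\<^sub>m m = 1\<^sub>m 1" using rep_finite_order[OF assms g] by blast
    moreover have "\<rho> g \<in> carrier_mat 1 1" using is_repD(2)[OF assms(2) g] .
    ultimately have "\<rho> g $$ (0, 0) ^ m = 1" and "mat_trace (\<rho> g) = \<rho> g $$ (0, 0)"
      using pow_mat_1x1_entry[of "\<rho> g" m] by (auto simp: mat_trace_def)
    with \<open>m > 0\<close> show ?thesis using power_eq_1_iff by fastforce
  qed
  then show ?thesis unfolding char_center_character_of[OF assms(2)] by auto
qed

lemma (in group) char_center_rep_scalar:
  assumes "finite (carrier G)" and rep: "is_rep G n \<rho>"
    and z: "z \<in> char_center G (character_of G \<rho>)"
  shows "\<exists>c. \<rho> z = c \<cdot>\<^sub>m 1\<^sub>m n"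
proof -
  have zG: "z \<in> carrier G" and "cmod (mat_trace (\<rho> z)) = real n"
    using z unfolding char_center_character_of[OF rep] by auto
  moreover obtain m where "m > 0" and "\<rho> z ^\<^sub>m m = 1\<^sub>m n"
    using rep_finite_order[OF assms(1) rep zG] by blast
  ultimately show ?thesis
    using scalar_if_finite_order_and_trace_norm_eq_dim is_repD(2)[OF rep zG] by blast
qed

lemma (in group) commutator_subgroup_char_center_subset_rep_kernel:
  assumes "finite (carrier G)" and rep: "is_rep G n \<rho>"
  shows "commutator_subgroup G (char_center G (character_of G \<rho>)) (carrier G) \<subseteq> rep_kernel G n \<rho>"
  unfolding commutator_subgroup_def
proof (rule generate_subgroup_incl[OF _ rep_kernel_subgroup[OF rep]], clarify)
  fix z g assume z: "z \<in> char_center G (character_of G \<rho>)" and g: "g \<in> carrier G"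
  have zG: "z \<in> carrier G" using z by (simp add: char_center_def)
  obtain c where c: "\<rho> z = c \<cdot>\<^sub>m 1\<^sub>m n" using char_center_rep_scalar[OF assms z] by blast
  have \<rho>g: "\<rho> g \<in> carrier_mat n n" using is_repD(2)[OF rep g] .
  have "\<rho> z * \<rho> g = c \<cdot>\<^sub>m (1\<^sub>m n * \<rho> g)"
    unfolding c by (rule mult_smult_assoc_mat[OF one_carrier_mat \<rho>g])
  also have "\<dots> = c \<cdot>\<^sub>m (\<rho> g * 1\<^sub>m n)" using \<rho>g by simp
  also have "\<dots> = \<rho> g * \<rho> z"
    unfolding c by (rule mult_smult_distrib[OF \<rho>g one_carrier_mat, symmetric])
  finally have "\<rho> z * \<rho> g = \<rho> g * \<rho> z" .
  then show "z \<otimes> g \<otimes> inv z \<otimes> inv g \<in> rep_kernel G n \<rho>"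
    using rep_commutator_in_kernel_iff[OF rep zG g] by simp
qed

lemma commutator_subgroup_carrier_eq_derived:
  "commutator_subgroup G (carrier G) (carrier G) = derived G (carrier G)"
  unfolding commutator_subgroup_def derived_def by (rule arg_cong[where f = "generate G"]) blast

theorem mainTheorem9:
  fixes G :: "('a, 'b) monoid_scheme" and \<chi> :: "'a \<Rightarrow> complex"
  assumes "group G" and "finite (carrier G)" and "\<chi> \<in> Irr G"
  shows "\<chi> \<one>\<^bsub>G\<^esub> = 1 \<longleftrightarrow>
         commutator_subgroup G (char_center G \<chi>) (carrier G) = derived G (carrier G)"
proof -
  interpret group G by fact
  obtain n \<rho> where irr: "irreducible_rep G n \<rho>" and \<chi>: "\<chi> = character_of G \<rho>"
    using assms(3) unfolding Irr_def by blast
  have rep: "is_rep G n \<rho>" using irr unfolding irreducible_rep_def by simp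
  have "\<chi> \<one>\<^bsub>G\<^esub> = 1 \<longleftrightarrow> n = 1" using character_of_one[OF rep] \<chi> by simp
  also have "\<dots> \<longleftrightarrow> commutator_subgroup G (char_center G \<chi>) (carrier G) = derived G (carrier G)"
  proof
    assume "n = 1"
    then show "commutator_subgroup G (char_center G \<chi>) (carrier G) = derived G (carrier G)"
      using char_center_linear[OF assms(2)] rep \<chi> commutator_subgroup_carrier_eq_derived by simp
  next
    assume "commutator_subgroup G (char_center G \<chi>) (carrier G) = derived G (carrier G)"
    then have "derived G (carrier G) \<subseteq> rep_kernel G n \<rho>"
      using commutator_subgroup_char_center_subset_rep_kernel[OF assms(2) rep] \<chi> by simp
    then have "\<rho> g * \<rho> h = \<rho> h * \<rho> g" if "g \<in> carrier G" and "h \<in> carrier G" for g h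
      using rep_commute_if_derived_subset_kernel[OF rep] that by blast
    then show "n = 1" using irreducible_rep_commutative_dim_one[OF irr] by blast
  qed
  finally show ?thesis .
qed

end
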